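(* Let $w=(w_1,\dots,w_n)$ be a random vector with i.i.d. symmetrically distributed components having finite moments $\mathbb{E}[w_1^m]=c_m$ (so $c_0=1$, $c_1=0$). Let $m_1,\dots,m_l$ ($l\le n$) be non-negative integers with $\sum_{i=1}^l m_i$ even, and let $z\in\{0,1\}$ be a random binary variable whose conditional law satisfies $P(z=1\mid w)=1-P(z=1\mid -w)$, i.e. $\pi(-w)=1-\pi(w)$ for $\pi(w):=P(z=1\mid w)$. Then $$\mathbb{E}\Big[\prod_{i=1}^l w_i^{m_i}\,z\Big]=\frac{\prod_{i=1}^l c_{m_i}}{2}.$$ *)

theory Defs
  imports "HOL-Probability.Probability"
begin

text \<open>The random vector w = (w_1,...,w_n), realised (0-indexed) as the map
  omega |-> (lambda i in {..<n}. W i omega), valued in PiM {..<n} (lambda _. borel).\<close>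
definition rvec :: "nat \<Rightarrow> (nat \<Rightarrow> 'a \<Rightarrow> real) \<Rightarrow> 'a \<Rightarrow> (nat \<Rightarrow> real)" where
  "rvec n W = (\<lambda>\<omega>. \<lambda>i\<in>{..<n}. W i \<omega>)"

end

theory Submission
  imports Defs
begin

text \<open>Write \<open>g x = \<Prod>i<l. x i ^ m i\<close> and let \<open>N\<close> be the law of \<open>w\<close>, the \<open>n\<close>-fold product of
  the common law of the \<open>w\<^sub>i\<close>. Conditioning on \<open>w\<close> turns the left-hand side into
  \<open>\<integral> g \<pi> dN\<close>. Coordinatewise negation preserves \<open>N\<close> and, as the total degree of \<open>g\<close> is even,
  also \<open>g\<close>; substituting it and using \<open>\<pi>(-x) = 1 - \<pi>(x)\<close> gives
  \<open>\<integral> g \<pi> dN = \<integral> g dN - \<integral> g \<pi> dN\<close>. Hence \<open>\<integral> g \<pi> dN\<close> is half of \<open>\<integral> g dN = \<Prod>i<l. c (m i)\<close>.\<close>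

lemma prod_power_uminus_even:
  fixes x :: "'i \<Rightarrow> 'b::comm_ring_1"
  assumes "even (\<Sum>i\<in>I. k i)"
  shows "(\<Prod>i\<in>I. (- x i) ^ k i) = (\<Prod>i\<in>I. x i ^ k i)"
proof -
  have "(\<Prod>i\<in>I. (- x i) ^ k i) = (\<Prod>i\<in>I. (-1) ^ k i * x i ^ k i)"
    by (simp add: power_minus[of "x i" for i])
  also have "\<dots> = (-1) ^ (\<Sum>i\<in>I. k i) * (\<Prod>i\<in>I. x i ^ k i)"
    by (simp only: prod.distrib power_sum)
  finally show ?thesis
    using assms by simp
qed

lemma (in product_prob_space) product_integral_prod_subset:
  fixes f :: "'i \<Rightarrow> 'a \<Rightarrow> real"
  assumes "finite K" "J \<subseteq> K" and integrable: "\<And>i. i \<in> J \<Longrightarrow> integrable (M i) (f i)"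
  shows "integrable (Pi\<^sub>M K M) (\<lambda>x. \<Prod>i\<in>J. f i (x i))"
    and "(\<integral>x. (\<Prod>i\<in>J. f i (x i)) \<partial>Pi\<^sub>M K M) = (\<Prod>i\<in>J. integral\<^sup>L (M i) (f i))"
proof -
  define f' where "f' i x = (if i \<in> J then f i x else 1)" for i x
  have pointwise: "(\<Prod>i\<in>K. f' i (x i)) = (\<Prod>i\<in>J. f i (x i))" for x
    using prod.inter_restrict[OF \<open>finite K\<close>, of "\<lambda>i. f i (x i)" J] \<open>J \<subseteq> K\<close>
    by (simp add: f'_def if_distrib Int_absorb1 cong: if_cong)
  have integrals: "(\<Prod>i\<in>K. integral\<^sup>L (M i) (f' i)) = (\<Prod>i\<in>J. integral\<^sup>L (M i) (f i))"
  proof -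
    have "integral\<^sup>L (M i) (f' i) = (if i \<in> J then integral\<^sup>L (M i) (f i) else 1)" for i
      by (cases "i \<in> J") (simp_all add: f'_def[abs_def] M.prob_space)
    then show ?thesis
      using prod.inter_restrict[OF \<open>finite K\<close>, of "\<lambda>i. integral\<^sup>L (M i) (f i)" J] \<open>J \<subseteq> K\<close>
      by (simp add: Int_absorb1)
  qed
  have "integrable (M i) (f' i)" if "i \<in> K" for i
    using integrable by (cases "i \<in> J") (simp_all add: f'_def[abs_def])
  from product_integrable_prod[OF \<open>finite K\<close> this] product_integral_prod[OF \<open>finite K\<close> this]
  show "integrable (Pi\<^sub>M K M) (\<lambda>x. \<Prod>i\<in>J. f i (x i))"
    and "(\<integral>x. (\<Prod>i\<in>J. f i (x i)) \<partial>Pi\<^sub>M K M) = (\<Prod>i\<in>J. integral\<^sup>L (M i) (f i))"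
    by (simp_all only: pointwise integrals)
qed

lemma product_prob_space_const:
  assumes "prob_space M"
  shows "product_prob_space (\<lambda>_. M)"
proof -
  interpret prob_space M by fact
  show ?thesis
    by (simp add: product_prob_space_def product_prob_space_axioms_def product_sigma_finite_def
        prob_space_axioms sigma_finite_measure_axioms)
qed

lemma
  fixes \<mu> :: "real measure"
  assumes "prob_space \<mu>" "sets \<mu> = sets borel" "distr \<mu> borel uminus = \<mu>" "finite I"
  shows measurable_PiM_uminus:
      "(\<lambda>x. \<lambda>i\<in>I. - x i) \<in> measurable (\<Pi>\<^sub>M i\<in>I. \<mu>) (\<Pi>\<^sub>M i\<in>I. \<mu>)"
    and distr_PiM_uminus:
      "distr (\<Pi>\<^sub>M i\<in>I. \<mu>) (\<Pi>\<^sub>M i\<in>I. \<mu>) (\<lambda>x. \<lambda>i\<in>I. - x i) = (\<Pi>\<^sub>M i\<in>I. \<mu>)"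
proof -
  interpret product_prob_space "\<lambda>_. \<mu>"
    using assms(1) by (rule product_prob_space_const)
  have uminus_meas: "(uminus :: real \<Rightarrow> real) \<in> measurable \<mu> \<mu>"
    using assms(2) by (simp cong: measurable_cong_sets)
  have restrict_eq: "(\<lambda>x. \<lambda>i\<in>I. - x i) = compose I uminus"
    by (rule ext) (simp add: compose_def)
  show "(\<lambda>x. \<lambda>i\<in>I. - x i) \<in> measurable (\<Pi>\<^sub>M i\<in>I. \<mu>) (\<Pi>\<^sub>M i\<in>I. \<mu>)"
    by (intro measurable_restrict measurable_compose[OF _ uminus_meas]) simp
  have "distr (\<Pi>\<^sub>M i\<in>I. \<mu>) (\<Pi>\<^sub>M i\<in>I. \<mu>) (compose I uminus) = (\<Pi>\<^sub>M i\<in>I. distr \<mu> \<mu> uminus)"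
    by (rule distr_PiM_finite_prob_space) (simp_all add: assms(4) uminus_meas product_prob_space_axioms)
  also have "distr \<mu> \<mu> uminus = \<mu>"
    using assms(3) distr_cong[OF refl assms(2), where f=uminus and g=uminus] by simp
  finally show "distr (\<Pi>\<^sub>M i\<in>I. \<mu>) (\<Pi>\<^sub>M i\<in>I. \<mu>) (\<lambda>x. \<lambda>i\<in>I. - x i) = (\<Pi>\<^sub>M i\<in>I. \<mu>)"
    by (simp only: restrict_eq)
qed

lemma integral_mult_eq_half_integral:
  fixes g p :: "'a \<Rightarrow> real"
  assumes \<phi>: "\<phi> \<in> measurable N N" "distr N N \<phi> = N"
    and g_inv: "\<And>x. x \<in> space N \<Longrightarrow> g (\<phi> x) = g x"
    and p_flip: "\<And>x. x \<in> space N \<Longrightarrow> p (\<phi> x) = 1 - p x"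
    and "integrable N g" "integrable N (\<lambda>x. g x * p x)"
  shows "(\<integral>x. g x * p x \<partial>N) = (\<integral>x. g x \<partial>N) / 2"
proof -
  have "(\<integral>x. g x * p x \<partial>N) = (\<integral>x. g x * p x \<partial>distr N N \<phi>)"
    using \<phi>(2) by simp
  also have "\<dots> = (\<integral>x. g (\<phi> x) * p (\<phi> x) \<partial>N)"
    using \<phi>(1) by (rule integral_distr) (use assms(6) in auto)
  also have "\<dots> = (\<integral>x. g x - g x * p x \<partial>N)"
    by (rule Bochner_Integration.integral_cong) (simp_all add: g_inv p_flip right_diff_distrib)
  also have "\<dots> = (\<integral>x. g x \<partial>N) - (\<integral>x. g x * p x \<partial>N)"
    using assms(5,6) by simp
  finally show ?thesis
    by simp
qed

lemma integral_PiM_mult_eq_half_integral: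
  fixes \<mu> :: "real measure" and g p :: "('i \<Rightarrow> real) \<Rightarrow> real"
  assumes "prob_space \<mu>" "sets \<mu> = sets borel" "distr \<mu> borel uminus = \<mu>" "finite I"
    and "\<And>x. g (\<lambda>i\<in>I. - x i) = g x"
    and "\<And>x. x \<in> space (\<Pi>\<^sub>M i\<in>I. \<mu>) \<Longrightarrow> p (\<lambda>i\<in>I. - x i) = 1 - p x"
    and "integrable (\<Pi>\<^sub>M i\<in>I. \<mu>) g" "integrable (\<Pi>\<^sub>M i\<in>I. \<mu>) (\<lambda>x. g x * p x)"
  shows "(\<integral>x. g x * p x \<partial>\<Pi>\<^sub>M i\<in>I. \<mu>) = (\<integral>x. g x \<partial>\<Pi>\<^sub>M i\<in>I. \<mu>) / 2"
  using measurable_PiM_uminus[OF assms(1-4)] distr_PiM_uminus[OF assms(1-4)] assms(5-8)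
  by (rule integral_mult_eq_half_integral)

lemma subalgebra_vimage_algebra:
  assumes "X \<in> measurable M P"
  shows "subalgebra M (vimage_algebra (space M) X P)"
  using assms unfolding subalgebra_def
  by (auto simp: sets_vimage_algebra2 measurable_space measurable_sets)

lemma measurable_rvec:
  assumes "\<And>i. i < n \<Longrightarrow> W i \<in> borel_measurable M"
  shows "rvec n W \<in> measurable M (\<Pi>\<^sub>M i\<in>{..<n}. borel)"
  unfolding rvec_def using assms by (intro measurable_restrict) simp

lemma (in prob_space) distr_rvec_iid:
  assumes indep: "indep_vars (\<lambda>_. borel) W {..<n}"
    and rv: "\<And>i. i < n \<Longrightarrow> W i \<in> borel_measurable M"
    and ident: "\<And>i. i < n \<Longrightarrow> distr M borel (W i) = \<mu>"
  shows "distr M (\<Pi>\<^sub>M i\<in>{..<n}. borel) (rvec n W) = (\<Pi>\<^sub>M i\<in>{..<n}. \<mu>)"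
proof (cases "n = 0")
  case True
  then have "rvec n W = (\<lambda>_ _. undefined)"
    by (simp add: rvec_def restrict_def)
  then show ?thesis
    using True emeasure_space_1
    by (auto simp: PiM_empty emeasure_distr intro!: measure_eqI dest!: subset_singletonD)
next
  case False
  then have "distr M (\<Pi>\<^sub>M i\<in>{..<n}. borel) (rvec n W) = (\<Pi>\<^sub>M i\<in>{..<n}. distr M borel (W i))"
    using indep_vars_iff_distr_eq_PiM'[where I="{..<n}" and M'="\<lambda>_. borel" and X=W] indep rv
    by (auto simp: rvec_def)
  also have "\<dots> = (\<Pi>\<^sub>M i\<in>{..<n}. \<mu>)"
    by (rule PiM_cong) (simp_all add: ident)
  finally show ?thesis .
qed

lemma (in prob_space) integral_mult_cond_exp_vimage:
  fixes z :: "'a \<Rightarrow> real" and p g :: "'b \<Rightarrow> real"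
  assumes X [measurable]: "X \<in> measurable M P"
    and [measurable]: "z \<in> borel_measurable M" and z_bounded: "AE \<omega> in M. \<bar>z \<omega>\<bar> \<le> B"
    and [measurable]: "p \<in> borel_measurable P"
    and cond: "AE \<omega> in M. real_cond_exp M (vimage_algebra (space M) X P) z \<omega> = p (X \<omega>)"
    and [measurable]: "g \<in> borel_measurable P" and g_int: "integrable (distr M P X) g"
  shows "integrable (distr M P X) (\<lambda>x. g x * p x)"
    and "(\<integral>\<omega>. g (X \<omega>) * z \<omega> \<partial>M) = (\<integral>x. g x * p x \<partial>distr M P X)"
proof -
  define F where "F = vimage_algebra (space M) X P"
  interpret F: finite_measure_subalgebra M F
    unfolding F_def by unfold_locales (rule subalgebra_vimage_algebra[OF X])
  have gX_F_meas: "(\<lambda>\<omega>. g (X \<omega>)) \<in> borel_measurable F"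
  proof -
    have "X \<in> measurable F P"
      unfolding F_def by (rule measurable_vimage_algebra1) (auto intro: measurable_space[OF X])
    then show ?thesis
      by measurable
  qed
  have z_int: "integrable M z"
    using z_bounded by (intro integrable_const_bound[where B=B]) auto
  have "AE \<omega> in M. real_cond_exp M F z \<omega> \<le> B"
    using z_bounded by (intro F.real_cond_exp_le_c[OF z_int]) auto
  moreover have "AE \<omega> in M. - B \<le> real_cond_exp M F z \<omega>"
    using z_bounded by (intro F.real_cond_exp_ge_c[OF z_int]) auto
  ultimately have p_bounded: "AE \<omega> in M. \<bar>p (X \<omega>)\<bar> \<le> B"
    using cond unfolding F_def by eventually_elim simp
  have gX_int: "integrable M (\<lambda>\<omega>. g (X \<omega>))"
    using g_int by (simp add: integrable_distr_eq)
  have integrable_gX_mult_bounded: "integrable M (\<lambda>\<omega>. g (X \<omega>) * h \<omega>)"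
    if [measurable]: "h \<in> borel_measurable M" and "AE \<omega> in M. \<bar>h \<omega>\<bar> \<le> B" for h
  proof (rule Bochner_Integration.integrable_bound)
    show "integrable M (\<lambda>\<omega>. B * g (X \<omega>))"
      using gX_int by simp
    show "AE \<omega> in M. norm (g (X \<omega>) * h \<omega>) \<le> norm (B * g (X \<omega>))"
      using that(2) by eventually_elim (auto simp: abs_mult mult.commute intro: mult_right_mono)
  qed simp
  show "integrable (distr M P X) (\<lambda>x. g x * p x)"
    using integrable_gX_mult_bounded[OF _ p_bounded] by (simp add: integrable_distr_eq)
  have "(\<integral>\<omega>. g (X \<omega>) * z \<omega> \<partial>M) = (\<integral>\<omega>. g (X \<omega>) * real_cond_exp M F z \<omega> \<partial>M)"
    using integrable_gX_mult_bounded[OF _ z_bounded] gX_F_meas by (intro F.real_cond_exp_intg(2)[symmetric]) auto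
  also have "\<dots> = (\<integral>\<omega>. g (X \<omega>) * p (X \<omega>) \<partial>M)"
    using cond unfolding F_def by (intro integral_cong_AE) auto
  also have "\<dots> = (\<integral>x. g x * p x \<partial>distr M P X)"
    by (simp add: integral_distr)
  finally show "(\<integral>\<omega>. g (X \<omega>) * z \<omega> \<partial>M) = (\<integral>x. g x * p x \<partial>distr M P X)" .
qed

theorem proposition1:
  fixes M :: "'a measure" and \<mu> :: "real measure"
    and n l :: nat and W :: "nat \<Rightarrow> 'a \<Rightarrow> real" and z :: "'a \<Rightarrow> real"
    and c :: "nat \<Rightarrow> real" and m :: "nat \<Rightarrow> nat"
    and \<pi> :: "(nat \<Rightarrow> real) \<Rightarrow> real"
  assumes "prob_space M"
    and "prob_space \<mu>" and "sets \<mu> = sets borel"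
    and sym: "distr \<mu> borel uminus = \<mu>"
    and moments: "\<And>k. integrable \<mu> (\<lambda>x. x ^ k)"
    and c_def: "\<And>k. c k = (\<integral>x. x ^ k \<partial>\<mu>)"
    and rv: "\<And>i. i < n \<Longrightarrow> W i \<in> borel_measurable M"
    and ident: "\<And>i. i < n \<Longrightarrow> distr M borel (W i) = \<mu>"
    and indep: "prob_space.indep_vars M (\<lambda>_. borel) W {..<n}"
    and l_le: "l \<le> n"
    and even_sum: "even (\<Sum>i<l. m i)"
    and z_meas: "z \<in> borel_measurable M"
    and z_bin: "\<And>\<omega>. \<omega> \<in> space M \<Longrightarrow> z \<omega> \<in> {0, 1}"
    and \<pi>_meas: "\<pi> \<in> borel_measurable (PiM {..<n} (\<lambda>_. borel))"
    and \<pi>_cond: "AE \<omega> in M. real_cond_exp M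
                     (vimage_algebra (space M) (rvec n W) (PiM {..<n} (\<lambda>_. borel))) z \<omega>
                   = \<pi> (rvec n W \<omega>)"
    and \<pi>_sym: "\<And>x. x \<in> space (PiM {..<n} (\<lambda>_. borel)) \<Longrightarrow>
                   \<pi> (\<lambda>i\<in>{..<n}. - x i) = 1 - \<pi> x"
  shows "(\<integral>\<omega>. (\<Prod>i<l. W i \<omega> ^ m i) * z \<omega> \<partial>M) = (\<Prod>i<l. c (m i)) / 2"
proof -
  interpret M: prob_space M by fact
  interpret PS: product_prob_space "\<lambda>_. \<mu>"
    using \<open>prob_space \<mu>\<close> by (rule product_prob_space_const)
  define P where "P = (\<Pi>\<^sub>M i\<in>{..<n}. borel :: real measure)"
  define N where "N = (\<Pi>\<^sub>M i\<in>{..<n}. \<mu>)"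
  define g where "g x = (\<Prod>i<l. x i ^ m i)" for x :: "nat \<Rightarrow> real"
  have law: "distr M P (rvec n W) = N"
    unfolding N_def P_def using indep rv ident by (rule M.distr_rvec_iid)
  have rvec_meas: "rvec n W \<in> measurable M P"
    unfolding P_def using rv by (rule measurable_rvec)
  have g_meas: "g \<in> borel_measurable P"
    unfolding g_def P_def using l_le
    by (intro borel_measurable_prod borel_measurable_power measurable_component_singleton) auto
  have g_int: "integrable N g" and g_integral: "(\<integral>x. g x \<partial>N) = (\<Prod>i<l. c (m i))"
    using PS.product_integral_prod_subset[of "{..<n}" "{..<l}" "\<lambda>i x. x ^ m i"] l_le moments
    unfolding N_def g_def c_def by auto
  have z_bounded: "AE \<omega> in M. \<bar>z \<omega>\<bar> \<le> 1"
    using z_bin by (intro AE_I2) fastforce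
  have gpi_int: "integrable N (\<lambda>x. g x * \<pi> x)"
    and tower: "(\<integral>\<omega>. g (rvec n W \<omega>) * z \<omega> \<partial>M) = (\<integral>x. g x * \<pi> x \<partial>N)"
    using M.integral_mult_cond_exp_vimage[OF rvec_meas z_meas z_bounded
        \<pi>_meas[folded P_def] \<pi>_cond[folded P_def] g_meas] g_int
    unfolding law by auto
  have "(\<integral>\<omega>. (\<Prod>i<l. W i \<omega> ^ m i) * z \<omega> \<partial>M) = (\<integral>\<omega>. g (rvec n W \<omega>) * z \<omega> \<partial>M)"
    using l_le by (simp add: g_def rvec_def)
  also have "\<dots> = (\<integral>x. g x * \<pi> x \<partial>N)"
    by (rule tower)
  also have "\<dots> = (\<integral>x. g x \<partial>N) / 2"
    unfolding N_def
  proof (rule integral_PiM_mult_eq_half_integral)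
    show "g (\<lambda>i\<in>{..<n}. - x i) = g x" for x
      using prod_power_uminus_even[OF even_sum, of x] l_le by (simp add: g_def)
    show "\<pi> (\<lambda>i\<in>{..<n}. - x i) = 1 - \<pi> x" if "x \<in> space (\<Pi>\<^sub>M i\<in>{..<n}. \<mu>)" for x
      using \<pi>_sym that sets_eq_imp_space_eq[OF \<open>sets \<mu> = sets borel\<close>] by (simp add: space_PiM)
  qed (use assms(2-4) g_int gpi_int in \<open>simp_all add: N_def\<close>)
  finally show ?thesis
    by (simp add: g_integral)
qed

end
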